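(* Let $f\in C^4(\mathbb I)$ on an open interval $\mathbb I$ with $f''>0$ and $f''''>0$ on $\mathbb I$. Let $\rho^{n-1},\rho^n,\phi^n\in\mathcal C$ and let $(\rho^{n+1},\phi^{n+1})\in\mathcal C^2$ solve the scheme, with $\rho^n,\rho^{n+1}$ and $\hat\rho^{n+\frac12}$ taking values in $\mathbb I$. Set $F^k_h:=F_h(\rho^k,\phi^k)$ and $v^{n+\frac12}=\gamma S^{n+\frac12}-\frac\chi2(\phi^{n+1}+\phi^n)+\frac{\chi^2\Delta t}{4\theta}(\rho^{n+1}-\rho^n)$. Then $$F_h^{n+1}-F_h^n\le-\Delta t\Big[\frac{1}{f''(\hat\rho^{n+\frac12})}\nabla_hv^{n+\frac12},\nabla_hv^{n+\frac12}\Big]-\frac{\theta}{\Delta t}\|\phi^{n+1}-\phi^n\|_2^2-\frac{\chi^2\Delta t}{4\theta}\|\rho^{n+1}-\rho^n\|_2^2\le 0 .$$ (This applies in particular to $f(\rho)=\rho(\ln\rho-1)$ and $f(\rho)=\rho(\ln\rho-1)+\kappa\rho^2/2$ on $(0,\infty)$, and to $f(\rho)=\rho\ln\rho+(M-\rho)\ln(1-\rho/M)$ on $(0,M)$.)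
   Context: Grid setting: $\Omega=(a,b)^3$, $N\in\mathbb N$, $h=(b-a)/N$, cell centers $(x_i,y_j,z_k)=(a+(i-\tfrac12)h,a+(j-\tfrac12)h,a+(k-\tfrac12)h)$, $1\le i,j,k\le N$. $\mathcal C$ is the space of cell-centered grid functions $u_{i,j,k}$, extended to ghost points by the discrete homogeneous Neumann condition $u_{0,j,k}=u_{1,j,k}$, $u_{N+1,j,k}=u_{N,j,k}$ (and likewise in $j$ and $k$). Operators: $D_xf_{i+1/2,j,k}=(f_{i+1,j,k}-f_{i,j,k})/h$, $A_xf_{i+1/2,j,k}=(f_{i+1,j,k}+f_{i,j,k})/2$; for face-centered $g$, $d_xg_{i,j,k}=(g_{i+1/2,j,k}-g_{i-1/2,j,k})/h$, $a_xg_{i,j,k}=(g_{i+1/2,j,k}+g_{i-1/2,j,k})/2$; analogously in $y,z$. $\nabla_hf=(D_xf,D_yf,D_zf)$, $\Delta_hf=d_xD_xf+d_yD_yf+d_zD_zf$, and for cell-centered $\mathcal D$, $\nabla_h\cdot(\mathcal D\nabla_hf):=d_x(A_x\mathcal D\,D_xf)+d_y(A_y\mathcal D\,D_yf)+d_z(A_z\mathcal D\,D_zf)$. Inner products: $\langle f,g\rangle=h^3\sum_{i,j,k=1}^Nf_{i,j,k}g_{i,j,k}$, $\|f\|_2^2=\langle f,f\rangle$; for face-centered vector fields $[\vec f,\vec g]=\langle a_x(f^xg^x),1\rangle+\langle a_y(f^yg^y),1\rangle+\langle a_z(f^zg^z),1\rangle$, $\|\nabla_hf\|_2^2=[\nabla_hf,\nabla_hf]$,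 and for cell-centered $\mathcal D$, $[\mathcal D\nabla_hf,\nabla_hg]:=[(A_x\mathcal D\,D_xf,A_y\mathcal D\,D_yf,A_z\mathcal D\,D_zf),\nabla_hg]$. Scheme: parameters $\gamma,\mu,\alpha,\chi,\theta>0$, $\Delta t>0$. With $\hat\rho^{n+\frac12}=\big((\tfrac32\rho^n-\tfrac12\rho^{n-1})^2+\Delta t^8\big)^{1/2}$ pointwise, $(\rho^{n+1},\phi^{n+1})$ satisfies $$\frac{\rho^{n+1}-\rho^n}{\Delta t}=\nabla_h\cdot\Big[\frac{1}{f''(\hat\rho^{n+\frac12})}\nabla_hv^{n+\frac12}\Big],\qquad \theta\frac{\phi^{n+1}-\phi^n}{\Delta t}=\frac\mu2\Delta_h(\phi^{n+1}+\phi^n)-\frac\alpha2(\phi^{n+1}+\phi^n)+\frac\chi2(\rho^{n+1}+\rho^n),$$ with $v^{n+\frac12}$ as in the claim and $S^{n+\frac12}=f'(\rho^{n+1})-\tfrac12f''(\rho^{n+1})(\rho^{n+1}-\rho^n)+\tfrac16f'''(\rho^{n+1})(\rho^{n+1}-\rho^n)^2$ pointwise. Discrete energy: $F_h(\rho,\phi)=\gamma\langle f(\rho),1\rangle-\chi\langle\rho,\phi\rangle+\frac\mu2\|\nabla_h\phi\|_2^2+\frac\alpha2\|\phi\|_2^2$. *)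

theory Defs
  imports "HOL-Analysis.Analysis"
begin

text \<open>Cell-centred grid functions on the N x N x N grid are represented as
  functions on index triples; only the values at indices 1..N are meaningful.
  Face-centred x-values at the face i+1/2 are stored at index i (i = 0..N),
  analogously in y and z.\<close>

type_synonym grid = "nat \<Rightarrow> nat \<Rightarrow> nat \<Rightarrow> real"

text \<open>Ghost-point extension by the discrete homogeneous Neumann condition.\<close>
definition clamp :: "nat \<Rightarrow> nat \<Rightarrow> nat" where
  "clamp N i = (if i = 0 then 1 else if N < i then N else i)"

definition gext :: "nat \<Rightarrow> grid \<Rightarrow> grid" where
  "gext N u = (\<lambda>i j k. u (clamp N i) (clamp N j) (clamp N k))"

definition Dx :: "real \<Rightarrow> nat \<Rightarrow> grid \<Rightarrow> grid" where
  "Dx h N f = (\<lambda>i j k. (gext N f (Suc i) j k - gext N f i j k) / h)"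
definition Dy :: "real \<Rightarrow> nat \<Rightarrow> grid \<Rightarrow> grid" where
  "Dy h N f = (\<lambda>i j k. (gext N f i (Suc j) k - gext N f i j k) / h)"
definition Dz :: "real \<Rightarrow> nat \<Rightarrow> grid \<Rightarrow> grid" where
  "Dz h N f = (\<lambda>i j k. (gext N f i j (Suc k) - gext N f i j k) / h)"

definition Ax :: "nat \<Rightarrow> grid \<Rightarrow> grid" where
  "Ax N f = (\<lambda>i j k. (gext N f (Suc i) j k + gext N f i j k) / 2)"
definition Ay :: "nat \<Rightarrow> grid \<Rightarrow> grid" where
  "Ay N f = (\<lambda>i j k. (gext N f i (Suc j) k + gext N f i j k) / 2)"
definition Az :: "nat \<Rightarrow> grid \<Rightarrow> grid" where
  "Az N f = (\<lambda>i j k. (gext N f i j (Suc k) + gext N f i j k) / 2)"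

text \<open>Face-to-cell operators (evaluated at cells i,j,k >= 1).\<close>
definition dx :: "real \<Rightarrow> grid \<Rightarrow> grid" where
  "dx h g = (\<lambda>i j k. (g i j k - g (i - 1) j k) / h)"
definition dy :: "real \<Rightarrow> grid \<Rightarrow> grid" where
  "dy h g = (\<lambda>i j k. (g i j k - g i (j - 1) k) / h)"
definition dz :: "real \<Rightarrow> grid \<Rightarrow> grid" where
  "dz h g = (\<lambda>i j k. (g i j k - g i j (k - 1)) / h)"

definition ax :: "grid \<Rightarrow> grid" where
  "ax g = (\<lambda>i j k. (g i j k + g (i - 1) j k) / 2)"
definition ay :: "grid \<Rightarrow> grid" where
  "ay g = (\<lambda>i j k. (g i j k + g i (j - 1) k) / 2)"
definition az :: "grid \<Rightarrow> grid" where
  "az g = (\<lambda>i j k. (g i j k + g i j (k - 1)) / 2)"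

definition lap_h :: "real \<Rightarrow> nat \<Rightarrow> grid \<Rightarrow> grid" where
  "lap_h h N f = (\<lambda>i j k. dx h (Dx h N f) i j k + dy h (Dy h N f) i j k + dz h (Dz h N f) i j k)"

definition div_D_grad :: "real \<Rightarrow> nat \<Rightarrow> grid \<Rightarrow> grid \<Rightarrow> grid" where
  "div_D_grad h N D f = (\<lambda>i j k.
      dx h (\<lambda>i j k. Ax N D i j k * Dx h N f i j k) i j k
    + dy h (\<lambda>i j k. Ay N D i j k * Dy h N f i j k) i j k
    + dz h (\<lambda>i j k. Az N D i j k * Dz h N f i j k) i j k)"

definition ip :: "real \<Rightarrow> nat \<Rightarrow> grid \<Rightarrow> grid \<Rightarrow> real" where
  "ip h N f g = h ^ 3 * (\<Sum>i\<in>{1..N}. \<Sum>j\<in>{1..N}. \<Sum>k\<in>{1..N}. f i j k * g i j k)"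

definition norm2sq :: "real \<Rightarrow> nat \<Rightarrow> grid \<Rightarrow> real" where
  "norm2sq h N f = ip h N f f"

definition fip :: "real \<Rightarrow> nat \<Rightarrow> grid \<times> grid \<times> grid \<Rightarrow> grid \<times> grid \<times> grid \<Rightarrow> real" where
  "fip h N F G = (case F of (fx, fy, fz) \<Rightarrow> case G of (gx, gy, gz) \<Rightarrow>
      ip h N (ax (\<lambda>i j k. fx i j k * gx i j k)) (\<lambda>i j k. 1)
    + ip h N (ay (\<lambda>i j k. fy i j k * gy i j k)) (\<lambda>i j k. 1)
    + ip h N (az (\<lambda>i j k. fz i j k * gz i j k)) (\<lambda>i j k. 1))"

definition grad_h :: "real \<Rightarrow> nat \<Rightarrow> grid \<Rightarrow> grid \<times> grid \<times> grid" where
  "grad_h h N f = (Dx h N f, Dy h N f, Dz h N f)"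

definition D_grad_h :: "real \<Rightarrow> nat \<Rightarrow> grid \<Rightarrow> grid \<Rightarrow> grid \<times> grid \<times> grid" where
  "D_grad_h h N D f = ((\<lambda>i j k. Ax N D i j k * Dx h N f i j k),
                       (\<lambda>i j k. Ay N D i j k * Dy h N f i j k),
                       (\<lambda>i j k. Az N D i j k * Dz h N f i j k))"

definition grad_norm2sq :: "real \<Rightarrow> nat \<Rightarrow> grid \<Rightarrow> real" where
  "grad_norm2sq h N f = fip h N (grad_h h N f) (grad_h h N f)"

definition F_h :: "real \<Rightarrow> nat \<Rightarrow> (real \<Rightarrow> real) \<Rightarrow> real \<Rightarrow> real \<Rightarrow> real \<Rightarrow> real
                   \<Rightarrow> grid \<Rightarrow> grid \<Rightarrow> real" where
  "F_h h N f gam chi mu alp rho phi =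
     gam * ip h N (\<lambda>i j k. f (rho i j k)) (\<lambda>i j k. 1) - chi * ip h N rho phi
     + mu / 2 * grad_norm2sq h N phi + alp / 2 * norm2sq h N phi"

definition rho_hat :: "real \<Rightarrow> grid \<Rightarrow> grid \<Rightarrow> grid" where
  "rho_hat dt rhom rho0 = (\<lambda>i j k. sqrt ((3/2 * rho0 i j k - 1/2 * rhom i j k)\<^sup>2 + dt ^ 8))"

definition S_half :: "(real \<Rightarrow> real) \<Rightarrow> (real \<Rightarrow> real) \<Rightarrow> (real \<Rightarrow> real) \<Rightarrow> grid \<Rightarrow> grid \<Rightarrow> grid" where
  "S_half f1 f2 f3 rho0 rho1 = (\<lambda>i j k.
     f1 (rho1 i j k) - 1/2 * f2 (rho1 i j k) * (rho1 i j k - rho0 i j k)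
     + 1/6 * f3 (rho1 i j k) * (rho1 i j k - rho0 i j k)\<^sup>2)"

definition v_half :: "(real \<Rightarrow> real) \<Rightarrow> (real \<Rightarrow> real) \<Rightarrow> (real \<Rightarrow> real) \<Rightarrow> real \<Rightarrow> real \<Rightarrow> real \<Rightarrow> real
                      \<Rightarrow> grid \<Rightarrow> grid \<Rightarrow> grid \<Rightarrow> grid \<Rightarrow> grid" where
  "v_half f1 f2 f3 gam chi th dt rho0 rho1 phi0 phi1 = (\<lambda>i j k.
     gam * S_half f1 f2 f3 rho0 rho1 i j k - chi / 2 * (phi1 i j k + phi0 i j k)
     + chi\<^sup>2 * dt / (4 * th) * (rho1 i j k - rho0 i j k))"

end

theory Submission
  imports Defs
begin

text \<open>Test the rho-equation with v and the phi-equation with phi1 - phi0 and sum by parts.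
  The coupling terms cancel, and the energy increment becomes
  -dt [D grad v, grad v] - th/dt |phi1 - phi0|^2 - chi^2 dt/(4 th) |rho1 - rho0|^2
  plus gam times the cell sum of f(rho1) - f(rho0) - S (rho1 - rho0). The latter is pointwise
  minus the fourth-order Lagrange remainder of the Taylor expansion of f about rho1, hence
  nonpositive since f'''' > 0; and f'' > 0 makes the mobility 1/f''(rho-hat) nonnegative.\<close>

lemma increment_le_cubic_taylor:
  fixes I :: "real set" and f f1 f2 f3 f4 :: "real \<Rightarrow> real"
  assumes I: "is_interval I"
    and d1: "\<And>x. x \<in> I \<Longrightarrow> (f has_real_derivative f1 x) (at x)"
    and d2: "\<And>x. x \<in> I \<Longrightarrow> (f1 has_real_derivative f2 x) (at x)"
    and d3: "\<And>x. x \<in> I \<Longrightarrow> (f2 has_real_derivative f3 x) (at x)"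
    and d4: "\<And>x. x \<in> I \<Longrightarrow> (f3 has_real_derivative f4 x) (at x)"
    and f4_pos: "\<And>x. x \<in> I \<Longrightarrow> f4 x > 0"
    and x: "x \<in> I" and c: "c \<in> I"
  shows "f c - f x \<le> (f1 c - 1/2 * f2 c * (c - x) + 1/6 * f3 c * (c - x)\<^sup>2) * (c - x)"
proof (cases "x = c")
  case False
  define Df :: "nat \<Rightarrow> real \<Rightarrow> real" where
    "Df m = [f, f1, f2, f3, f4] ! m" for m
  have between_in_I: "t \<in> I" if "min x c \<le> t" "t \<le> max x c" for t
  proof -
    have "t \<in> closed_segment x c" using that
      by (auto simp: closed_segment_eq_real_ivl split: if_splits)
    then show ?thesis using I x c
      by (meson is_interval_convex convex_contains_segment subsetD)
  qed
  have "\<forall>m t. m < 4 \<and> min x c \<le> t \<and> t \<le> max x c \<longrightarrow> DERIV (Df m) t :> Df (Suc m) t"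
  proof (intro allI impI)
    fix m :: nat and t assume "m < 4 \<and> min x c \<le> t \<and> t \<le> max x c"
    then have "t \<in> I" and "m = 0 \<or> m = 1 \<or> m = 2 \<or> m = 3" using between_in_I by auto
    then show "DERIV (Df m) t :> Df (Suc m) t"
      using d1 d2 d3 d4 by (auto simp: Df_def)
  qed
  then obtain t where t: "if x < c then x < t \<and> t < c else c < t \<and> t < x"
    and taylor: "f x = (\<Sum>m<4. Df m c / fact m * (x - c) ^ m) + Df 4 t / fact 4 * (x - c) ^ 4"
    using Taylor[of 4 Df f "min x c" "max x c" c x] False by (auto simp: Df_def)
  have "f4 t > 0" using t between_in_I f4_pos by (simp split: if_splits)
  moreover have "f c - f x = (f1 c - 1/2 * f2 c * (c - x) + 1/6 * f3 c * (c - x)\<^sup>2) * (c - x)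
                             - f4 t / 24 * (x - c) ^ 4"
    using taylor by (simp add: Df_def lessThan_nat_numeral fact_numeral eval_nat_numeral field_simps)
  ultimately show ?thesis by simp
qed simp

lemma sum_diff_mult_by_parts:
  fixes g U :: "nat \<Rightarrow> real"
  shows "(\<Sum>i\<in>{1..N}. (g i - g (i - 1)) * U i)
       = g N * U (Suc N) - g 0 * U 1 - (\<Sum>i\<in>{1..N}. g i * (U (Suc i) - U i))"
  by (induction N) (auto simp: algebra_simps)

lemma sum_shift_down:
  fixes p :: "nat \<Rightarrow> real"
  shows "(\<Sum>i\<in>{1..N}. p (i - 1)) = (\<Sum>i\<in>{1..N}. p i) + p 0 - p N"
  by (induction N) auto

text \<open>The right-hand side is written as the face average used by fip.\<close>

lemma summation_by_parts_face_average:
  fixes g U :: "nat \<Rightarrow> real"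
  assumes "g 0 = 0" and "g N = 0"
  shows "(\<Sum>i\<in>{1..N}. (g i - g (i - 1)) / h * U i) =
    - (\<Sum>i\<in>{1..N}. (g i * ((U (Suc i) - U i) / h) + g (i - 1) * ((U i - U (i - 1)) / h)) / 2)"
proof -
  define p where "p i = g i * ((U (Suc i) - U i) / h)" for i
  have "(\<Sum>i\<in>{1..N}. (g i - g (i - 1)) / h * U i) = (\<Sum>i\<in>{1..N}. (g i - g (i - 1)) * U i) / h"
    by (simp add: sum_divide_distrib)
  also have "\<dots> = - (\<Sum>i\<in>{1..N}. g i * (U (Suc i) - U i)) / h"
    by (subst sum_diff_mult_by_parts) (simp add: assms)
  also have "\<dots> = - (\<Sum>i\<in>{1..N}. p i)"
    by (simp add: p_def sum_divide_distrib)
  also have "\<dots> = - ((\<Sum>i\<in>{1..N}. p i) + (\<Sum>i\<in>{1..N}. p (i - 1))) / 2"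
    by (subst sum_shift_down) (simp add: p_def assms)
  also have "\<dots> = - (\<Sum>i\<in>{1..N}. (p i + p (i - 1)) / 2)"
    by (simp only: sum.distrib flip: sum_divide_distrib)
  finally show ?thesis by (simp add: p_def)
qed

definition grid_sum :: "nat \<Rightarrow> grid \<Rightarrow> real" where
  "grid_sum N F = (\<Sum>i\<in>{1..N}. \<Sum>j\<in>{1..N}. \<Sum>k\<in>{1..N}. F i j k)"

lemma ip_eq_grid_sum: "ip h N f g = h ^ 3 * grid_sum N (\<lambda>i j k. f i j k * g i j k)"
  by (simp add: ip_def grid_sum_def)

lemma grid_sum_add: "grid_sum N (\<lambda>i j k. F i j k + G i j k) = grid_sum N F + grid_sum N G"
  by (simp add: grid_sum_def sum.distrib)

lemma grid_sum_diff: "grid_sum N (\<lambda>i j k. F i j k - G i j k) = grid_sum N F - grid_sum N G"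
  by (simp add: grid_sum_def sum_subtractf)

lemma grid_sum_cmult: "grid_sum N (\<lambda>i j k. a * F i j k) = a * grid_sum N F"
  by (simp add: grid_sum_def sum_distrib_left)

lemma grid_sum_cong:
  "(\<And>i j k. i \<in> {1..N} \<Longrightarrow> j \<in> {1..N} \<Longrightarrow> k \<in> {1..N} \<Longrightarrow> F i j k = G i j k)
   \<Longrightarrow> grid_sum N F = grid_sum N G"
  unfolding grid_sum_def by (intro sum.cong refl) auto

lemma grid_sum_nonneg:
  "(\<And>i j k. i \<in> {1..N} \<Longrightarrow> j \<in> {1..N} \<Longrightarrow> k \<in> {1..N} \<Longrightarrow> 0 \<le> F i j k)
   \<Longrightarrow> 0 \<le> grid_sum N F"
  unfolding grid_sum_def by (intro sum_nonneg) auto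

lemma grid_sum_x_innermost: "grid_sum N F = (\<Sum>j\<in>{1..N}. \<Sum>k\<in>{1..N}. \<Sum>i\<in>{1..N}. F i j k)"
proof -
  have "grid_sum N F = (\<Sum>j\<in>{1..N}. \<Sum>i\<in>{1..N}. \<Sum>k\<in>{1..N}. F i j k)"
    unfolding grid_sum_def by (rule sum.swap)
  also have "\<dots> = (\<Sum>j\<in>{1..N}. \<Sum>k\<in>{1..N}. \<Sum>i\<in>{1..N}. F i j k)"
    by (rule sum.cong[OF refl], rule sum.swap)
  finally show ?thesis .
qed

lemma grid_sum_transpose_xy: "grid_sum N (\<lambda>i j k. F j i k) = grid_sum N F"
  unfolding grid_sum_def by (rule sum.swap)

lemma grid_sum_transpose_xz: "grid_sum N (\<lambda>i j k. F k j i) = grid_sum N F"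
proof -
  have "grid_sum N (\<lambda>i j k. F k j i) = (\<Sum>j\<in>{1..N}. \<Sum>k\<in>{1..N}. \<Sum>i\<in>{1..N}. F k j i)"
    by (rule grid_sum_x_innermost)
  also have "\<dots> = (\<Sum>k\<in>{1..N}. \<Sum>j\<in>{1..N}. \<Sum>i\<in>{1..N}. F k j i)"
    by (rule sum.swap)
  finally show ?thesis by (simp add: grid_sum_def)
qed

lemma gext_eq_self: "i \<in> {1..N} \<Longrightarrow> j \<in> {1..N} \<Longrightarrow> k \<in> {1..N} \<Longrightarrow> gext N u i j k = u i j k"
  by (simp add: gext_def clamp_def)

lemma gext_ghost_x:
  assumes "1 \<le> N"
  shows "gext N u 0 j k = gext N u 1 j k" and "gext N u (Suc N) j k = gext N u N j k"
  using assms by (simp_all add: gext_def clamp_def)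

text \<open>The Neumann ghost values make the face differences vanish on the boundary faces
  0 and N, which is what lets summation by parts go through without boundary terms.\<close>

lemma summation_by_parts_x:
  assumes N: "1 \<le> N"
  shows "grid_sum N (\<lambda>i j k. dx h (\<lambda>i j k. c i j k * Dx h N W i j k) i j k * U i j k)
       = - grid_sum N (\<lambda>i j k. ax (\<lambda>i j k. c i j k * Dx h N W i j k * Dx h N U i j k) i j k)"
proof -
  have line: "(\<Sum>i\<in>{1..N}. dx h (\<lambda>i j k. c i j k * Dx h N W i j k) i j k * U i j k)
      = - (\<Sum>i\<in>{1..N}. ax (\<lambda>i j k. c i j k * Dx h N W i j k * Dx h N U i j k) i j k)"
    if jk: "j \<in> {1..N}" "k \<in> {1..N}" for j k
  proof -
    define g where "g i = c i j k * Dx h N W i j k" for i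
    define V where "V i = gext N U i j k" for i
    have "(\<Sum>i\<in>{1..N}. dx h (\<lambda>i j k. c i j k * Dx h N W i j k) i j k * U i j k)
        = (\<Sum>i\<in>{1..N}. (g i - g (i - 1)) / h * V i)"
      using jk by (intro sum.cong) (auto simp: dx_def g_def V_def gext_eq_self)
    also have "\<dots> = - (\<Sum>i\<in>{1..N}. (g i * ((V (Suc i) - V i) / h) + g (i - 1) * ((V i - V (i - 1)) / h)) / 2)"
      by (rule summation_by_parts_face_average) (simp_all add: g_def Dx_def gext_ghost_x[OF N])
    also have "\<dots> = - (\<Sum>i\<in>{1..N}. ax (\<lambda>i j k. c i j k * Dx h N W i j k * Dx h N U i j k) i j k)"
      by (simp add: ax_def g_def V_def Dx_def)
    finally show ?thesis .
  qed
  show ?thesis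
    unfolding grid_sum_x_innermost by (simp only: line sum_negf cong: sum.cong)
qed

lemma Dy_eq_Dx_transpose: "Dy h N f = (\<lambda>i j k. Dx h N (\<lambda>i j k. f j i k) j i k)"
  by (simp add: fun_eq_iff Dx_def Dy_def gext_def)

lemma dy_eq_dx_transpose: "dy h g = (\<lambda>i j k. dx h (\<lambda>i j k. g j i k) j i k)"
  by (simp add: fun_eq_iff dx_def dy_def)

lemma ay_eq_ax_transpose: "ay g = (\<lambda>i j k. ax (\<lambda>i j k. g j i k) j i k)"
  by (simp add: fun_eq_iff ax_def ay_def)

lemma Dz_eq_Dx_transpose: "Dz h N f = (\<lambda>i j k. Dx h N (\<lambda>i j k. f k j i) k j i)"
  by (simp add: fun_eq_iff Dx_def Dz_def gext_def)

lemma dz_eq_dx_transpose: "dz h g = (\<lambda>i j k. dx h (\<lambda>i j k. g k j i) k j i)"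
  by (simp add: fun_eq_iff dx_def dz_def)

lemma az_eq_ax_transpose: "az g = (\<lambda>i j k. ax (\<lambda>i j k. g k j i) k j i)"
  by (simp add: fun_eq_iff ax_def az_def)

lemma summation_by_parts_y:
  assumes "1 \<le> N"
  shows "grid_sum N (\<lambda>i j k. dy h (\<lambda>i j k. c i j k * Dy h N W i j k) i j k * U i j k)
       = - grid_sum N (\<lambda>i j k. ay (\<lambda>i j k. c i j k * Dy h N W i j k * Dy h N U i j k) i j k)"
  by (subst (1 2) grid_sum_transpose_xy[symmetric])
     (simp add: dy_eq_dx_transpose Dy_eq_Dx_transpose ay_eq_ax_transpose summation_by_parts_x[OF assms])

lemma summation_by_parts_z:
  assumes "1 \<le> N"
  shows "grid_sum N (\<lambda>i j k. dz h (\<lambda>i j k. c i j k * Dz h N W i j k) i j k * U i j k)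
       = - grid_sum N (\<lambda>i j k. az (\<lambda>i j k. c i j k * Dz h N W i j k * Dz h N U i j k) i j k)"
  by (subst (1 2) grid_sum_transpose_xz[symmetric])
     (simp add: dz_eq_dx_transpose Dz_eq_Dx_transpose az_eq_ax_transpose summation_by_parts_x[OF assms])

lemma ip_div_D_grad_h:
  assumes "1 \<le> N"
  shows "ip h N (div_D_grad h N D W) U = - fip h N (D_grad_h h N D W) (grad_h h N U)"
  unfolding ip_eq_grid_sum fip_def div_D_grad_def D_grad_h_def grad_h_def
  by (simp only: distrib_right grid_sum_add mult_1_right split summation_by_parts_x[OF assms]
        summation_by_parts_y[OF assms] summation_by_parts_z[OF assms]) (simp add: algebra_simps)

lemma lap_h_eq_div_D_grad_one: "lap_h h N f = div_D_grad h N (\<lambda>_ _ _. 1) f"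
  by (simp add: fun_eq_iff lap_h_def div_D_grad_def Ax_def Ay_def Az_def gext_def)

lemma D_grad_h_one: "D_grad_h h N (\<lambda>_ _ _. 1) f = grad_h h N f"
  by (simp add: D_grad_h_def grad_h_def Ax_def Ay_def Az_def gext_def)

corollary ip_lap_h:
  assumes "1 \<le> N"
  shows "ip h N (lap_h h N W) U = - fip h N (grad_h h N W) (grad_h h N U)"
  using ip_div_D_grad_h[OF assms] by (simp add: lap_h_eq_div_D_grad_one D_grad_h_one)

lemma ip_diff_left: "ip h N (\<lambda>i j k. f i j k - g i j k) u = ip h N f u - ip h N g u"
  by (simp add: ip_eq_grid_sum left_diff_distrib grid_sum_diff right_diff_distrib)

lemma face_averages_diff:
  "ax (\<lambda>i j k. f i j k - g i j k) = (\<lambda>i j k. ax f i j k - ax g i j k)"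
  "ay (\<lambda>i j k. f i j k - g i j k) = (\<lambda>i j k. ay f i j k - ay g i j k)"
  "az (\<lambda>i j k. f i j k - g i j k) = (\<lambda>i j k. az f i j k - az g i j k)"
  by (simp_all add: fun_eq_iff ax_def ay_def az_def field_simps)

lemma grad_h_add_diff:
  "grad_h h N (\<lambda>i j k. f i j k + g i j k)
     = (\<lambda>i j k. Dx h N f i j k + Dx h N g i j k, \<lambda>i j k. Dy h N f i j k + Dy h N g i j k,
        \<lambda>i j k. Dz h N f i j k + Dz h N g i j k)"
  "grad_h h N (\<lambda>i j k. f i j k - g i j k)
     = (\<lambda>i j k. Dx h N f i j k - Dx h N g i j k, \<lambda>i j k. Dy h N f i j k - Dy h N g i j k,
        \<lambda>i j k. Dz h N f i j k - Dz h N g i j k)"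
  by (simp_all add: fun_eq_iff grad_h_def Dx_def Dy_def Dz_def gext_def
      add_divide_distrib diff_divide_distrib)

lemma fip_grad_h_add_diff:
  "fip h N (grad_h h N (\<lambda>i j k. f i j k + g i j k)) (grad_h h N (\<lambda>i j k. f i j k - g i j k))
   = grad_norm2sq h N f - grad_norm2sq h N g"
  unfolding grad_h_add_diff grad_norm2sq_def grad_h_def fip_def
  by (simp add: square_diff_square_factored[symmetric] face_averages_diff ip_diff_left)

lemma norm2sq_nonneg: "0 \<le> h \<Longrightarrow> 0 \<le> norm2sq h N f"
  by (simp add: norm2sq_def ip_eq_grid_sum grid_sum_nonneg)

lemma fip_D_grad_h_nonneg:
  assumes "0 \<le> h" and "1 \<le> N"
    and D_nonneg: "\<And>i j k. i \<in> {1..N} \<Longrightarrow> j \<in> {1..N} \<Longrightarrow> k \<in> {1..N} \<Longrightarrow> 0 \<le> D i j k"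
  shows "0 \<le> fip h N (D_grad_h h N D v) (grad_h h N v)"
proof -
  have "0 \<le> gext N D i j k" for i j k
    using D_nonneg \<open>1 \<le> N\<close> by (simp add: gext_def clamp_def)
  then have "0 \<le> Ax N D i j k" "0 \<le> Ay N D i j k" "0 \<le> Az N D i j k" for i j k
    by (simp_all add: Ax_def Ay_def Az_def)
  then show ?thesis
    using \<open>0 \<le> h\<close> unfolding fip_def D_grad_h_def grad_h_def ip_eq_grid_sum
    by (auto intro!: add_nonneg_nonneg mult_nonneg_nonneg grid_sum_nonneg
        simp: ax_def ay_def az_def mult.assoc)
qed

lemma F_h_increment_eq:
  assumes N: "1 \<le> N"
    and scheme_phi: "\<And>i j k. i \<in> {1..N} \<Longrightarrow> j \<in> {1..N} \<Longrightarrow> k \<in> {1..N} \<Longrightarrow>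
        th * (phi1 i j k - phi0 i j k) / dt =
        mu / 2 * lap_h h N (\<lambda>i j k. phi1 i j k + phi0 i j k) i j k
        - alp / 2 * (phi1 i j k + phi0 i j k) + chi / 2 * (rho1 i j k + rho0 i j k)"
  shows "F_h h N f gam chi mu alp rho1 phi1 - F_h h N f gam chi mu alp rho0 phi0
    = gam * ip h N (\<lambda>i j k. f (rho1 i j k) - f (rho0 i j k)
                    - S_half f1 f2 f3 rho0 rho1 i j k * (rho1 i j k - rho0 i j k)) (\<lambda>_ _ _. 1)
      + ip h N (\<lambda>i j k. rho1 i j k - rho0 i j k) (v_half f1 f2 f3 gam chi th dt rho0 rho1 phi0 phi1)
      - th / dt * norm2sq h N (\<lambda>i j k. phi1 i j k - phi0 i j k)
      - chi\<^sup>2 * dt / (4 * th) * norm2sq h N (\<lambda>i j k. rho1 i j k - rho0 i j k)"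
proof -
  define L where "L = lap_h h N (\<lambda>i j k. phi1 i j k + phi0 i j k)"
  define S where "S = S_half f1 f2 f3 rho0 rho1"
  define c where "c = chi\<^sup>2 * dt / (4 * th)"
  have grad_change: "grad_norm2sq h N phi1 - grad_norm2sq h N phi0
      = - ip h N L (\<lambda>i j k. phi1 i j k - phi0 i j k)"
    by (simp add: L_def ip_lap_h[OF N] fip_grad_h_add_diff)
  have cell: "gam * (f (rho1 i j k) - f (rho0 i j k)) - chi * (rho1 i j k * phi1 i j k - rho0 i j k * phi0 i j k)
      + alp / 2 * (phi1 i j k * phi1 i j k - phi0 i j k * phi0 i j k)
      - mu / 2 * (L i j k * (phi1 i j k - phi0 i j k))
    = gam * (f (rho1 i j k) - f (rho0 i j k) - S i j k * (rho1 i j k - rho0 i j k))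
      + (rho1 i j k - rho0 i j k) * v_half f1 f2 f3 gam chi th dt rho0 rho1 phi0 phi1 i j k
      - th / dt * ((phi1 i j k - phi0 i j k) * (phi1 i j k - phi0 i j k))
      - c * ((rho1 i j k - rho0 i j k) * (rho1 i j k - rho0 i j k))"
    if "i \<in> {1..N}" "j \<in> {1..N}" "k \<in> {1..N}" for i j k
  proof -
    have lap: "mu / 2 * L i j k = th / dt * (phi1 i j k - phi0 i j k)
        + alp / 2 * (phi1 i j k + phi0 i j k) - chi / 2 * (rho1 i j k + rho0 i j k)"
      using scheme_phi[OF that] by (simp add: L_def)
    show ?thesis
      unfolding mult.assoc[of "mu / 2", symmetric] lap v_half_def c_def[symmetric] S_def[symmetric]
      by (simp add: field_simps)
  qed
  have "F_h h N f gam chi mu alp rho1 phi1 - F_h h N f gam chi mu alp rho0 phi0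
      = h ^ 3 * grid_sum N (\<lambda>i j k. gam * (f (rho1 i j k) - f (rho0 i j k))
          - chi * (rho1 i j k * phi1 i j k - rho0 i j k * phi0 i j k)
          + alp / 2 * (phi1 i j k * phi1 i j k - phi0 i j k * phi0 i j k)
          - mu / 2 * (L i j k * (phi1 i j k - phi0 i j k)))"
  proof -
    have "F_h h N f gam chi mu alp rho1 phi1 - F_h h N f gam chi mu alp rho0 phi0
        = gam * (ip h N (\<lambda>i j k. f (rho1 i j k)) (\<lambda>_ _ _. 1) - ip h N (\<lambda>i j k. f (rho0 i j k)) (\<lambda>_ _ _. 1))
          - chi * (ip h N rho1 phi1 - ip h N rho0 phi0)
          + alp / 2 * (ip h N phi1 phi1 - ip h N phi0 phi0)
          + mu / 2 * (grad_norm2sq h N phi1 - grad_norm2sq h N phi0)"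
      by (simp add: F_h_def norm2sq_def algebra_simps)
    then show ?thesis
      unfolding grad_change
      by (simp only: grid_sum_add grid_sum_diff grid_sum_cmult ip_eq_grid_sum mult_1_right)
         (simp add: algebra_simps)
  qed
  also have "\<dots> = h ^ 3 * grid_sum N (\<lambda>i j k.
            gam * (f (rho1 i j k) - f (rho0 i j k) - S i j k * (rho1 i j k - rho0 i j k))
          + (rho1 i j k - rho0 i j k) * v_half f1 f2 f3 gam chi th dt rho0 rho1 phi0 phi1 i j k
          - th / dt * ((phi1 i j k - phi0 i j k) * (phi1 i j k - phi0 i j k))
          - c * ((rho1 i j k - rho0 i j k) * (rho1 i j k - rho0 i j k)))"
    by (intro arg_cong[where f = "\<lambda>x. h ^ 3 * x"] grid_sum_cong cell)
  finally show ?thesis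
    unfolding norm2sq_def S_def[symmetric] c_def[symmetric]
    by (simp only: grid_sum_add grid_sum_diff grid_sum_cmult ip_eq_grid_sum mult_1_right)
       (simp add: algebra_simps)
qed

lemma ip_increment_eq_dissipation:
  assumes "1 \<le> N" and "dt \<noteq> 0"
    and scheme: "\<And>i j k. i \<in> {1..N} \<Longrightarrow> j \<in> {1..N} \<Longrightarrow> k \<in> {1..N} \<Longrightarrow>
        (rho1 i j k - rho0 i j k) / dt = div_D_grad h N D v i j k"
  shows "ip h N (\<lambda>i j k. rho1 i j k - rho0 i j k) v = - dt * fip h N (D_grad_h h N D v) (grad_h h N v)"
proof -
  have "rho1 i j k - rho0 i j k = dt * div_D_grad h N D v i j k"
    if "i \<in> {1..N}" "j \<in> {1..N}" "k \<in> {1..N}" for i j k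
    using scheme[OF that] \<open>dt \<noteq> 0\<close> by (simp add: field_simps)
  then have "ip h N (\<lambda>i j k. rho1 i j k - rho0 i j k) v = dt * ip h N (div_D_grad h N D v) v"
    unfolding ip_eq_grid_sum grid_sum_cmult[symmetric] mult.left_commute[of "h ^ 3" dt]
    by (intro arg_cong[where f = "\<lambda>x. h ^ 3 * x"] grid_sum_cong) simp
  then show ?thesis by (simp add: ip_div_D_grad_h[OF \<open>1 \<le> N\<close>])
qed

lemma ip_taylor_defect_nonpos:
  fixes f f1 f2 f3 f4 :: "real \<Rightarrow> real"
  assumes "0 \<le> h" and I: "is_interval I"
    and d1: "\<And>x. x \<in> I \<Longrightarrow> (f has_real_derivative f1 x) (at x)"
    and d2: "\<And>x. x \<in> I \<Longrightarrow> (f1 has_real_derivative f2 x) (at x)"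
    and d3: "\<And>x. x \<in> I \<Longrightarrow> (f2 has_real_derivative f3 x) (at x)"
    and d4: "\<And>x. x \<in> I \<Longrightarrow> (f3 has_real_derivative f4 x) (at x)"
    and f4_pos: "\<And>x. x \<in> I \<Longrightarrow> f4 x > 0"
    and rho0_I: "\<And>i j k. i \<in> {1..N} \<Longrightarrow> j \<in> {1..N} \<Longrightarrow> k \<in> {1..N} \<Longrightarrow> rho0 i j k \<in> I"
    and rho1_I: "\<And>i j k. i \<in> {1..N} \<Longrightarrow> j \<in> {1..N} \<Longrightarrow> k \<in> {1..N} \<Longrightarrow> rho1 i j k \<in> I"
  shows "ip h N (\<lambda>i j k. f (rho1 i j k) - f (rho0 i j k)
           - S_half f1 f2 f3 rho0 rho1 i j k * (rho1 i j k - rho0 i j k)) (\<lambda>_ _ _. 1) \<le> 0"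
  unfolding ip_def using \<open>0 \<le> h\<close> increment_le_cubic_taylor[OF I d1 d2 d3 d4 f4_pos rho0_I rho1_I]
  by (auto simp: S_half_def intro!: mult_nonneg_nonpos sum_nonpos)

theorem mainTheorem4:
  fixes a b :: real and N :: nat and h :: real
    and I :: "real set"
    and f f1 f2 f3 f4 :: "real \<Rightarrow> real"
    and gam mu alp chi th dt :: real
    and rhom rho0 rho1 phi0 phi1 :: grid
  assumes ab: "a < b" and N: "N \<ge> 1" and h: "h = (b - a) / real N"
    and I_open: "open I" and I_int: "is_interval I" and I_ne: "I \<noteq> {}"
    and d1: "\<And>x. x \<in> I \<Longrightarrow> (f has_real_derivative f1 x) (at x)"
    and d2: "\<And>x. x \<in> I \<Longrightarrow> (f1 has_real_derivative f2 x) (at x)"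
    and d3: "\<And>x. x \<in> I \<Longrightarrow> (f2 has_real_derivative f3 x) (at x)"
    and d4: "\<And>x. x \<in> I \<Longrightarrow> (f3 has_real_derivative f4 x) (at x)"
    and c4: "continuous_on I f4"
    and f2_pos: "\<And>x. x \<in> I \<Longrightarrow> f2 x > 0"
    and f4_pos: "\<And>x. x \<in> I \<Longrightarrow> f4 x > 0"
    and params: "gam > 0" "mu > 0" "alp > 0" "chi > 0" "th > 0" "dt > 0"
    and rho0_I: "\<And>i j k. i \<in> {1..N} \<Longrightarrow> j \<in> {1..N} \<Longrightarrow> k \<in> {1..N} \<Longrightarrow> rho0 i j k \<in> I"
    and rho1_I: "\<And>i j k. i \<in> {1..N} \<Longrightarrow> j \<in> {1..N} \<Longrightarrow> k \<in> {1..N} \<Longrightarrow> rho1 i j k \<in> I"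
    and rhohat_I: "\<And>i j k. i \<in> {1..N} \<Longrightarrow> j \<in> {1..N} \<Longrightarrow> k \<in> {1..N} \<Longrightarrow>
                     rho_hat dt rhom rho0 i j k \<in> I"
    and scheme_rho: "\<And>i j k. i \<in> {1..N} \<Longrightarrow> j \<in> {1..N} \<Longrightarrow> k \<in> {1..N} \<Longrightarrow>
        (rho1 i j k - rho0 i j k) / dt =
        div_D_grad h N (\<lambda>i j k. 1 / f2 (rho_hat dt rhom rho0 i j k))
          (v_half f1 f2 f3 gam chi th dt rho0 rho1 phi0 phi1) i j k"
    and scheme_phi: "\<And>i j k. i \<in> {1..N} \<Longrightarrow> j \<in> {1..N} \<Longrightarrow> k \<in> {1..N} \<Longrightarrow>
        th * (phi1 i j k - phi0 i j k) / dt =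
        mu / 2 * lap_h h N (\<lambda>i j k. phi1 i j k + phi0 i j k) i j k
        - alp / 2 * (phi1 i j k + phi0 i j k) + chi / 2 * (rho1 i j k + rho0 i j k)"
  shows
    "let v = v_half f1 f2 f3 gam chi th dt rho0 rho1 phi0 phi1;
         D = (\<lambda>i j k. 1 / f2 (rho_hat dt rhom rho0 i j k));
         R = - dt * fip h N (D_grad_h h N D v) (grad_h h N v)
             - th / dt * norm2sq h N (\<lambda>i j k. phi1 i j k - phi0 i j k)
             - chi\<^sup>2 * dt / (4 * th) * norm2sq h N (\<lambda>i j k. rho1 i j k - rho0 i j k)
     in F_h h N f gam chi mu alp rho1 phi1 - F_h h N f gam chi mu alp rho0 phi0 \<le> R \<and> R \<le> 0"
proof -
  define v where "v = v_half f1 f2 f3 gam chi th dt rho0 rho1 phi0 phi1"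
  define D where "D = (\<lambda>i j k. 1 / f2 (rho_hat dt rhom rho0 i j k))"
  define T where "T = ip h N (\<lambda>i j k. f (rho1 i j k) - f (rho0 i j k)
           - S_half f1 f2 f3 rho0 rho1 i j k * (rho1 i j k - rho0 i j k)) (\<lambda>_ _ _. 1)"
  have "0 < h" using ab N h by simp
  have increment: "F_h h N f gam chi mu alp rho1 phi1 - F_h h N f gam chi mu alp rho0 phi0
      = gam * T + ip h N (\<lambda>i j k. rho1 i j k - rho0 i j k) v
        - th / dt * norm2sq h N (\<lambda>i j k. phi1 i j k - phi0 i j k)
        - chi\<^sup>2 * dt / (4 * th) * norm2sq h N (\<lambda>i j k. rho1 i j k - rho0 i j k)"
    unfolding T_def v_def by (rule F_h_increment_eq[OF N scheme_phi])
  have dissipation: "ip h N (\<lambda>i j k. rho1 i j k - rho0 i j k) v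
      = - dt * fip h N (D_grad_h h N D v) (grad_h h N v)"
    using params(6) scheme_rho by (intro ip_increment_eq_dissipation[OF N]) (simp_all add: D_def v_def)
  have "T \<le> 0"
    unfolding T_def using \<open>0 < h\<close>
    by (intro ip_taylor_defect_nonpos[OF _ I_int d1 d2 d3 d4 f4_pos rho0_I rho1_I]) simp_all
  moreover have "0 \<le> fip h N (D_grad_h h N D v) (grad_h h N v)"
    using fip_D_grad_h_nonneg \<open>0 < h\<close> N f2_pos rhohat_I by (simp add: D_def less_imp_le)
  moreover have "0 \<le> norm2sq h N u" for u
    using \<open>0 < h\<close> by (simp add: norm2sq_nonneg)
  ultimately have "gam * T \<le> 0" and "0 \<le> dt * fip h N (D_grad_h h N D v) (grad_h h N v)"
    and "0 \<le> th / dt * norm2sq h N (\<lambda>i j k. phi1 i j k - phi0 i j k)"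
    and "0 \<le> chi\<^sup>2 * dt / (4 * th) * norm2sq h N (\<lambda>i j k. rho1 i j k - rho0 i j k)"
    using params by (simp_all add: mult_nonneg_nonpos)
  with increment dissipation show ?thesis
    unfolding Let_def v_def[symmetric] D_def[symmetric] by linarith
qed

end
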